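(* Let $G$ be a finitely generated group and $H$ a finitely generated normal subgroup of $G$. Let $\Phi$ be a uniformly continuous action of $G$ on a metric space $\Omega$, and let $U,V\subset\Omega$. If the restricted action $\Phi|_{H}$ (of $H$ on $\Omega$) is topologically Anosov with respect to $(U,V)$, then $\Phi$ is topologically Anosov with respect to $(U,V)$.
   Context: Let $(\Omega,\mathrm{dist})$ be a metric space; $B(\delta,x)=\{y:\mathrm{dist}(x,y)<\delta\}$ and $B(\delta,U)=\bigcup_{x\in U}B(\delta,x)$. An action of a group $G$ is a map $\Phi:G\times\Omega\to\Omega$ such that each $f_g=\Phi(g,\cdot)$ is a homeomorphism of $\Omega$, $\Phi(e,x)=x$, and $\Phi(g_1g_2,x)=\Phi(g_1,\Phi(g_2,x))$. For a finitely generated $G$, the action is uniformly continuous if for some finite symmetric generating set $S$ (symmetric: $s\in S\Rightarrow s^{-1}\in S$) all maps $f_s$, $s\in S$, are uniformly continuous. Fix a finite symmetric generating set $S$ of $G$. For $d>0$, a family $\{y_g\}_{g\in G}\subset\Omega$ is a $d$-pseudotrajectory if $\mathrm{dist}(y_{sg},f_s(y_g))<d$ for all $s\in S$, $g\in G$. A uniformly continuous action has the shadowing property on $V\subset\Omega$ if for every $\varepsilon>0$ there is $d>0$ such that for every $d$-pseudotrajectory $\{y_g\}$ with all $y_g\in V$ there is $x_e\in\Omega$ with $\mathrm{dist}(y_g,f_g(x_e))<\varepsilon$ for all $g\in G$ (this property does not depend on the choice of $S$). The action is expansive on $U\subset\Omega$ if there is $\Delta>0$ such that whenever $x_1,x_2\in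 U$ satisfy $\Phi(g,x_1),\Phi(g,x_2)\in U$ and $\mathrm{dist}(\Phi(g,x_1),\Phi(g,x_2))<\Delta$ for all $g\in G$, then $x_1=x_2$. The action is topologically Anosov with respect to $(U,V)$ if (TA1) there is $\gamma>0$ with $B(\gamma,V)\subset U$, (TA2) it has the shadowing property on $V$, and (TA3) it is expansive on $U$. *)

theory Defs
  imports "HOL-Analysis.Analysis" "HOL-Algebra.Algebra"
begin

definition fin_gen_group :: "('g, 'b) monoid_scheme \<Rightarrow> bool" where
  "fin_gen_group G \<longleftrightarrow>
     (\<exists>S. finite S \<and> S \<subseteq> carrier G \<and> generate G S = carrier G)"

definition fin_sym_gen_set :: "('g, 'b) monoid_scheme \<Rightarrow> 'g set \<Rightarrow> bool" where
  "fin_sym_gen_set G S \<longleftrightarrow>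
     finite S \<and> S \<subseteq> carrier G \<and> generate G S = carrier G \<and>
     (\<forall>s\<in>S. inv\<^bsub>G\<^esub> s \<in> S)"

definition group_action :: "('g, 'b) monoid_scheme \<Rightarrow> ('g \<Rightarrow> 'a::topological_space \<Rightarrow> 'a) \<Rightarrow> bool" where
  "group_action G \<Phi> \<longleftrightarrow>
     (\<forall>g\<in>carrier G. \<exists>h. homeomorphism UNIV UNIV (\<Phi> g) h) \<and>
     (\<forall>x. \<Phi> \<one>\<^bsub>G\<^esub> x = x) \<and>
     (\<forall>g1\<in>carrier G. \<forall>g2\<in>carrier G. \<forall>x. \<Phi> (g1 \<otimes>\<^bsub>G\<^esub> g2) x = \<Phi> g1 (\<Phi> g2 x))"

definition unif_cont_action :: "('g, 'b) monoid_scheme \<Rightarrow> ('g \<Rightarrow> 'a::metric_space \<Rightarrow> 'a) \<Rightarrow> bool" where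
  "unif_cont_action G \<Phi> \<longleftrightarrow>
     (\<exists>S. fin_sym_gen_set G S \<and> (\<forall>s\<in>S. uniformly_continuous_on UNIV (\<Phi> s)))"

definition pseudotrajectory ::
  "('g, 'b) monoid_scheme \<Rightarrow> 'g set \<Rightarrow> ('g \<Rightarrow> 'a::metric_space \<Rightarrow> 'a) \<Rightarrow> real \<Rightarrow> ('g \<Rightarrow> 'a) \<Rightarrow> bool" where
  "pseudotrajectory G S \<Phi> d y \<longleftrightarrow>
     (\<forall>s\<in>S. \<forall>g\<in>carrier G. dist (y (s \<otimes>\<^bsub>G\<^esub> g)) (\<Phi> s (y g)) < d)"

definition shadowing_wrt ::
  "('g, 'b) monoid_scheme \<Rightarrow> 'g set \<Rightarrow> ('g \<Rightarrow> 'a::metric_space \<Rightarrow> 'a) \<Rightarrow> 'a set \<Rightarrow> bool" where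
  "shadowing_wrt G S \<Phi> V \<longleftrightarrow>
     (\<forall>\<epsilon>>0. \<exists>d>0. \<forall>y. pseudotrajectory G S \<Phi> d y \<and> (\<forall>g\<in>carrier G. y g \<in> V) \<longrightarrow>
        (\<exists>x. \<forall>g\<in>carrier G. dist (y g) (\<Phi> g x) < \<epsilon>))"

(* the paper states the property is independent of S; we take "for some
   finite symmetric generating set" *)
definition shadowing_on ::
  "('g, 'b) monoid_scheme \<Rightarrow> ('g \<Rightarrow> 'a::metric_space \<Rightarrow> 'a) \<Rightarrow> 'a set \<Rightarrow> bool" where
  "shadowing_on G \<Phi> V \<longleftrightarrow> (\<exists>S. fin_sym_gen_set G S \<and> shadowing_wrt G S \<Phi> V)"

definition expansive_on ::
  "('g, 'b) monoid_scheme \<Rightarrow> ('g \<Rightarrow> 'a::metric_space \<Rightarrow> 'a) \<Rightarrow> 'a set \<Rightarrow> bool" where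
  "expansive_on G \<Phi> U \<longleftrightarrow>
     (\<exists>\<Delta>>0. \<forall>x1\<in>U. \<forall>x2\<in>U.
        (\<forall>g\<in>carrier G. \<Phi> g x1 \<in> U \<and> \<Phi> g x2 \<in> U \<and> dist (\<Phi> g x1) (\<Phi> g x2) < \<Delta>)
        \<longrightarrow> x1 = x2)"

definition ball_set :: "real \<Rightarrow> 'a::metric_space set \<Rightarrow> 'a set" where
  "ball_set \<delta> V = (\<Union>x\<in>V. ball x \<delta>)"

definition topologically_anosov ::
  "('g, 'b) monoid_scheme \<Rightarrow> ('g \<Rightarrow> 'a::metric_space \<Rightarrow> 'a) \<Rightarrow> 'a set \<Rightarrow> 'a set \<Rightarrow> bool" where
  "topologically_anosov G \<Phi> U V \<longleftrightarrow>
     (\<exists>\<gamma>>0. ball_set \<gamma> V \<subseteq> U) \<and> shadowing_on G \<Phi> V \<and> expansive_on G \<Phi> U"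

end

theory Submission
  imports Defs
begin

text \<open>Expansivity passes from \<open>H\<close> to \<open>G\<close> trivially, since every \<open>G\<close>-orbit contains the
  \<open>H\<close>-orbit. For shadowing, restrict a fine \<open>G\<close>-pseudotrajectory \<open>y\<close> to a coset \<open>H g\<close>:
  reindexed by \<open>H\<close> it is an \<open>H\<close>-pseudotrajectory (each generator of \<open>H\<close> is a word in the
  generators of \<open>G\<close>), so \<open>H\<close>-shadowing gives a point \<open>x g\<close> tracing \<open>y\<close> along \<open>H g\<close>. As \<open>H\<close> is
  normal, the image of \<open>x g\<close> under a generator \<open>s\<close> traces \<open>y\<close> along \<open>H s g\<close> too, so
  expansivity of the \<open>H\<close>-action forces \<open>x (s g) = s (x g)\<close>. Hence the points \<open>x g\<close> form the
  single \<open>G\<close>-orbit of \<open>x 1\<close>, which traces \<open>y\<close>.\<close>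

lemma group_action_one:
  "group_action G \<Phi> \<Longrightarrow> \<Phi> \<one>\<^bsub>G\<^esub> x = x"
  unfolding group_action_def by auto

lemma group_action_mult:
  "group_action G \<Phi> \<Longrightarrow> a \<in> carrier G \<Longrightarrow> b \<in> carrier G \<Longrightarrow>
    \<Phi> (a \<otimes>\<^bsub>G\<^esub> b) x = \<Phi> a (\<Phi> b x)"
  unfolding group_action_def by auto

lemma (in group) uniformly_continuous_on_action_generate:
  fixes \<Phi> :: "'a \<Rightarrow> 'c::metric_space \<Rightarrow> 'c"
  assumes "group_action G \<Phi>" "S \<subseteq> carrier G" "\<forall>s\<in>S. inv s \<in> S"
    and "\<forall>s\<in>S. uniformly_continuous_on UNIV (\<Phi> s)"
    and "t \<in> generate G S"
  shows "uniformly_continuous_on UNIV (\<Phi> t)"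
  using assms(5)
proof (induction rule: generate.induct)
  case one
  then show ?case using group_action_one[OF assms(1)] uniformly_continuous_on_id by simp
next
  case (eng h1 h2)
  then have "h1 \<in> carrier G" "h2 \<in> carrier G"
    using generate_in_carrier[OF assms(2)] by auto
  then have "\<Phi> (h1 \<otimes> h2) = (\<lambda>x. \<Phi> h1 (\<Phi> h2 x))"
    using group_action_mult[OF assms(1)] by auto
  moreover have "uniformly_continuous_on (range (\<Phi> h2)) (\<Phi> h1)"
    using eng.IH(1) unfolding uniformly_continuous_on_def by (meson UNIV_I)
  ultimately show ?case
    using uniformly_continuous_on_compose[OF eng.IH(2)] by simp
qed (use assms(3,4) in auto)

lemma uniformly_continuous_on_eventually_modulus:
  fixes f :: "'a::metric_space \<Rightarrow> 'b::metric_space"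
  assumes "uniformly_continuous_on UNIV f" "\<eta> > 0"
  shows "\<forall>\<^sub>F \<delta> in at_right 0. \<forall>a b. dist a b < \<delta> \<longrightarrow> dist (f a) (f b) < \<eta>"
proof -
  obtain \<delta> where "\<delta> > 0" "\<forall>a b. dist a b < \<delta> \<longrightarrow> dist (f a) (f b) < \<eta>"
    using assms unfolding uniformly_continuous_on_def by blast
  then show ?thesis
    unfolding eventually_at_right_field by (intro exI[of _ \<delta>]) auto
qed

lemma eventually_at_right_0_le:
  "(\<eta>::real) > 0 \<Longrightarrow> \<forall>\<^sub>F d in at_right 0. d \<le> \<eta>"
  unfolding eventually_at_right_field by (intro exI[of _ \<eta>]) auto

lemma eventually_at_right_0_witness:
  fixes P :: "real \<Rightarrow> bool"
  assumes "\<forall>\<^sub>F d in at_right 0. P d"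
  obtains d where "d > 0" "P d"
  using eventually_happens'[OF _ eventually_conj[OF eventually_at_right_less assms]] that
  by (auto simp: trivial_limit_def[symmetric])

lemma pseudotrajectory_mono:
  "pseudotrajectory G S \<Phi> d y \<Longrightarrow> d \<le> d' \<Longrightarrow> pseudotrajectory G S \<Phi> d' y"
  unfolding pseudotrajectory_def by (meson order_less_le_trans)

lemma (in group) pseudotrajectory_generate_eventually:
  fixes \<Phi> :: "'a \<Rightarrow> 'c::metric_space \<Rightarrow> 'c"
  assumes "group_action G \<Phi>" "S \<subseteq> carrier G" "\<forall>s\<in>S. inv s \<in> S"
    and "\<forall>s\<in>S. uniformly_continuous_on UNIV (\<Phi> s)"
    and "t \<in> generate G S" "\<eta> > 0"
  shows "\<forall>\<^sub>F d in at_right 0. \<forall>y. pseudotrajectory G S \<Phi> d y \<longrightarrow>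
           (\<forall>k\<in>carrier G. dist (y (t \<otimes> k)) (\<Phi> t (y k)) < \<eta>)"
  using assms(5,6)
proof (induction arbitrary: \<eta> rule: generate.induct)
  case one
  then show ?case using group_action_one[OF assms(1)] by simp
next
  case (incl h)
  then have "\<forall>\<^sub>F d in at_right 0. d \<le> \<eta>"
    by (intro eventually_at_right_0_le)
  then show ?case
    by eventually_elim (use incl in \<open>unfold pseudotrajectory_def, meson order_less_le_trans\<close>)
next
  case (inv h)
  then have "\<forall>\<^sub>F d in at_right 0. d \<le> \<eta>"
    by (intro eventually_at_right_0_le)
  then show ?case
    by eventually_elim (use inv assms(3) in \<open>unfold pseudotrajectory_def, meson order_less_le_trans\<close>)
next
  case (eng h1 h2)
  have carrier: "h1 \<in> carrier G" "h2 \<in> carrier G"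
    using eng generate_in_carrier[OF assms(2)] by auto
  obtain \<delta> where "\<delta> > 0" and \<delta>: "\<forall>a b. dist a b < \<delta> \<longrightarrow> dist (\<Phi> h1 a) (\<Phi> h1 b) < \<eta>/2"
    using uniformly_continuous_on_action_generate[OF assms(1-4) eng.hyps(1)] \<open>\<eta> > 0\<close>
    unfolding uniformly_continuous_on_def by (metis UNIV_I half_gt_zero)
  have "\<forall>\<^sub>F d in at_right 0.
      (\<forall>y. pseudotrajectory G S \<Phi> d y \<longrightarrow>
         (\<forall>k\<in>carrier G. dist (y (h1 \<otimes> k)) (\<Phi> h1 (y k)) < \<eta>/2)) \<and>
      (\<forall>y. pseudotrajectory G S \<Phi> d y \<longrightarrow>
         (\<forall>k\<in>carrier G. dist (y (h2 \<otimes> k)) (\<Phi> h2 (y k)) < \<delta>))"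
    using \<open>\<eta> > 0\<close> \<open>\<delta> > 0\<close> by (intro eventually_conj eng.IH) auto
  then show ?case
  proof eventually_elim
    case (elim d)
    show ?case
    proof (intro allI impI ballI)
      fix y k assume y: "pseudotrajectory G S \<Phi> d y" and k: "k \<in> carrier G"
      have "dist (y (h1 \<otimes> (h2 \<otimes> k))) (\<Phi> h1 (y (h2 \<otimes> k))) < \<eta>/2"
        using elim y k carrier by simp
      moreover have "dist (\<Phi> h1 (y (h2 \<otimes> k))) (\<Phi> h1 (\<Phi> h2 (y k))) < \<eta>/2"
        using elim y k \<delta> by blast
      ultimately have "dist (y (h1 \<otimes> (h2 \<otimes> k))) (\<Phi> h1 (\<Phi> h2 (y k))) < \<eta>"
        by (metis dist_commute dist_triangle_half_l)
      then show "dist (y (h1 \<otimes> h2 \<otimes> k)) (\<Phi> (h1 \<otimes> h2) (y k)) < \<eta>"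
        using carrier k group_action_mult[OF assms(1) carrier] by (simp add: m_assoc)
    qed
  qed
qed

lemma (in group) equivariant_on_generate:
  assumes "group_action G \<Phi>" "S \<subseteq> carrier G" "\<forall>s\<in>S. inv s \<in> S"
    and "\<forall>s\<in>S. \<forall>g\<in>carrier G. x (s \<otimes> g) = \<Phi> s (x g)"
    and "t \<in> generate G S" "g \<in> carrier G"
  shows "x (t \<otimes> g) = \<Phi> t (x g)"
  using assms(5,6)
proof (induction arbitrary: g rule: generate.induct)
  case one
  then show ?case using group_action_one[OF assms(1)] by simp
next
  case (eng h1 h2)
  have carrier: "h1 \<in> carrier G" "h2 \<in> carrier G"
    using eng generate_in_carrier[OF assms(2)] by auto
  then have "x (h1 \<otimes> h2 \<otimes> g) = x (h1 \<otimes> (h2 \<otimes> g))"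
    using eng.prems by (simp add: m_assoc)
  also have "\<dots> = \<Phi> h1 (\<Phi> h2 (x g))"
    using eng carrier by simp
  also have "\<dots> = \<Phi> (h1 \<otimes> h2) (x g)"
    using group_action_mult[OF assms(1) carrier] by simp
  finally show ?case .
qed (use assms(3,4) in auto)

lemma (in group) pseudotrajectory_subgroup_coset:
  assumes "H \<subseteq> carrier G" "SH \<subseteq> H" "g \<in> carrier G"
    and "\<forall>t\<in>SH. \<forall>k\<in>carrier G. dist (y (t \<otimes> k)) (\<Phi> t (y k)) < d"
  shows "pseudotrajectory (G\<lparr>carrier := H\<rparr>) SH \<Phi> d (\<lambda>h. y (h \<otimes> g))"
  unfolding pseudotrajectory_def using assms by (auto simp: m_assoc subset_iff)

text \<open>Normality moves \<open>s\<close> past the coset: \<open>h s = s h'\<close> with \<open>h' = s\<inverse> h s \<in> H\<close>.\<close>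

lemma (in normal) coset_shadow_translate:
  assumes "group_action G \<Phi>" "s \<in> carrier G" "g \<in> carrier G"
    and shadow: "\<forall>h\<in>H. dist (y (h \<otimes> g)) (\<Phi> h x) < \<epsilon>"
    and modulus: "\<forall>a b. dist a b < \<epsilon> \<longrightarrow> dist (\<Phi> s a) (\<Phi> s b) < \<eta>"
    and pseudo: "\<forall>k\<in>carrier G. dist (y (s \<otimes> k)) (\<Phi> s (y k)) < \<eta>"
  shows "\<forall>h\<in>H. dist (y (h \<otimes> (s \<otimes> g))) (\<Phi> h (\<Phi> s x)) < 2 * \<eta>"
proof
  fix h assume h: "h \<in> H"
  define h' where "h' = inv s \<otimes> h \<otimes> s"
  have h': "h' \<in> H" "h' \<in> carrier G"
    unfolding h'_def using inv_op_closed2[of "inv s" h] h assms(2) by simp_all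
  have "h \<otimes> s = s \<otimes> h'"
    unfolding h'_def using h assms(2) by (simp add: m_assoc[symmetric])
  then have point: "h \<otimes> (s \<otimes> g) = s \<otimes> (h' \<otimes> g)"
    and orbit: "\<Phi> h (\<Phi> s x) = \<Phi> s (\<Phi> h' x)"
    using h h' assms(1-3) by (metis m_assoc mem_carrier group_action_mult)+
  have "dist (y (s \<otimes> (h' \<otimes> g))) (\<Phi> s (y (h' \<otimes> g))) < \<eta>"
    using pseudo h' assms(3) by simp
  moreover have "dist (\<Phi> s (y (h' \<otimes> g))) (\<Phi> s (\<Phi> h' x)) < \<eta>"
    using modulus shadow h' by blast
  ultimately show "dist (y (h \<otimes> (s \<otimes> g))) (\<Phi> h (\<Phi> s x)) < 2 * \<eta>"
    unfolding point orbit using dist_triangle_less_add[of _ "\<Phi> s (y (h' \<otimes> g))"]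
    by (metis dist_commute mult_2)
qed

lemma expansive_on_common_shadow:
  assumes "expansive_on K \<Phi> U" "ball_set \<gamma> V \<subseteq> U" "\<gamma> > 0"
    and "\<one>\<^bsub>K\<^esub> \<in> carrier K" "\<forall>x. \<Phi> \<one>\<^bsub>K\<^esub> x = x"
  obtains r where "r > 0"
    and "\<forall>x1 x2 Y. (\<forall>k\<in>carrier K. Y k \<in> V \<and> dist (Y k) (\<Phi> k x1) < r \<and> dist (Y k) (\<Phi> k x2) < r)
           \<longrightarrow> x1 = x2"
proof -
  obtain \<Delta> where "\<Delta> > 0" and \<Delta>: "\<forall>x1\<in>U. \<forall>x2\<in>U.
      (\<forall>k\<in>carrier K. \<Phi> k x1 \<in> U \<and> \<Phi> k x2 \<in> U \<and> dist (\<Phi> k x1) (\<Phi> k x2) < \<Delta>) \<longrightarrow> x1 = x2"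
    using assms(1) unfolding expansive_on_def by blast
  have "x1 = x2"
    if Y: "\<forall>k\<in>carrier K. Y k \<in> V \<and> dist (Y k) (\<Phi> k x1) < min \<gamma> (\<Delta>/2)
             \<and> dist (Y k) (\<Phi> k x2) < min \<gamma> (\<Delta>/2)" for x1 x2 Y
  proof -
    have near: "\<Phi> k x1 \<in> U \<and> \<Phi> k x2 \<in> U \<and> dist (\<Phi> k x1) (\<Phi> k x2) < \<Delta>" if "k \<in> carrier K" for k
    proof -
      have "\<Phi> k x1 \<in> ball_set \<gamma> V" "\<Phi> k x2 \<in> ball_set \<gamma> V"
        using Y that unfolding ball_set_def by auto
      moreover have "dist (\<Phi> k x1) (\<Phi> k x2) < \<Delta>"
        using Y that dist_triangle_less_add[of "\<Phi> k x1" "Y k" "\<Delta>/2" "\<Phi> k x2" "\<Delta>/2"]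
        by (auto simp: dist_commute)
      ultimately show ?thesis using assms(2) by blast
    qed
    then have "x1 \<in> U" "x2 \<in> U" using near[OF assms(4)] assms(5) by simp_all
    then show ?thesis using \<Delta> near by blast
  qed
  then show ?thesis using that \<open>\<gamma> > 0\<close> \<open>\<Delta> > 0\<close> by (metis half_gt_zero min_less_iff_conj)
qed

lemma expansive_on_mono_carrier:
  "expansive_on K \<Phi> U \<Longrightarrow> carrier K \<subseteq> carrier G \<Longrightarrow> expansive_on G \<Phi> U"
  unfolding expansive_on_def by (meson subsetD)

lemma (in normal) shadowing_of_coset_shadows:
  fixes \<Phi> :: "'a \<Rightarrow> 'c::metric_space \<Rightarrow> 'c"
  assumes "group_action G \<Phi>" "S \<subseteq> carrier G" "generate G S = carrier G" "\<forall>s\<in>S. inv s \<in> S"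
    and unique: "\<forall>x1 x2 Y. (\<forall>h\<in>H. Y h \<in> V \<and> dist (Y h) (\<Phi> h x1) < r \<and> dist (Y h) (\<Phi> h x2) < r)
      \<longrightarrow> x1 = x2"
    and "\<epsilon> \<le> \<eta>" "2 * \<eta> \<le> r"
    and modulus: "\<forall>s\<in>S. \<forall>a b. dist a b < \<epsilon> \<longrightarrow> dist (\<Phi> s a) (\<Phi> s b) < \<eta>"
    and y: "pseudotrajectory G S \<Phi> \<eta> y" "\<forall>g\<in>carrier G. y g \<in> V"
    and coset_shadows: "\<forall>g\<in>carrier G. \<exists>x. \<forall>h\<in>H. dist (y (h \<otimes> g)) (\<Phi> h x) < \<epsilon>"
  shows "\<exists>x. \<forall>g\<in>carrier G. dist (y g) (\<Phi> g x) < \<epsilon>"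
proof -
  obtain x where x: "\<forall>g\<in>carrier G. \<forall>h\<in>H. dist (y (h \<otimes> g)) (\<Phi> h (x g)) < \<epsilon>"
    using bchoice[OF coset_shadows] by blast
  have "x (s \<otimes> g) = \<Phi> s (x g)" if s: "s \<in> S" and g: "g \<in> carrier G" for s g
  proof (rule unique[rule_format, where Y = "\<lambda>h. y (h \<otimes> (s \<otimes> g))"], intro ballI conjI)
    fix h assume "h \<in> H"
    have "s \<otimes> g \<in> carrier G" using s g assms(2) by blast
    then show "y (h \<otimes> (s \<otimes> g)) \<in> V" using y(2) \<open>h \<in> H\<close> by simp
    have "dist (y (h \<otimes> (s \<otimes> g))) (\<Phi> h (x (s \<otimes> g))) < \<epsilon>"
      using x \<open>s \<otimes> g \<in> carrier G\<close> \<open>h \<in> H\<close> by blast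
    then show "dist (y (h \<otimes> (s \<otimes> g))) (\<Phi> h (x (s \<otimes> g))) < r"
      using assms(6,7) zero_le_dist[of "y (h \<otimes> (s \<otimes> g))" "\<Phi> h (x (s \<otimes> g))"] by linarith
    have "\<forall>k\<in>carrier G. dist (y (s \<otimes> k)) (\<Phi> s (y k)) < \<eta>"
      using y(1) s unfolding pseudotrajectory_def by blast
    then have "\<forall>h\<in>H. dist (y (h \<otimes> (s \<otimes> g))) (\<Phi> h (\<Phi> s (x g))) < 2 * \<eta>"
      using s g assms(2) modulus
      by (intro coset_shadow_translate[OF assms(1) _ g bspec[OF x g]]) blast+
    then show "dist (y (h \<otimes> (s \<otimes> g))) (\<Phi> h (\<Phi> s (x g))) < r"
      using \<open>h \<in> H\<close> assms(7) by fastforce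
  qed
  then have orbit: "x g = \<Phi> g (x \<one>)" if "g \<in> carrier G" for g
    using equivariant_on_generate[OF assms(1,2,4), of x g \<one>] assms(3) that by simp
  show ?thesis
  proof (intro exI[of _ "x \<one>"] ballI)
    fix g assume "g \<in> carrier G"
    then have "dist (y (\<one> \<otimes> g)) (\<Phi> \<one> (x g)) < \<epsilon>"
      using x subgroup.one_closed[OF subgroup_axioms] by blast
    then show "dist (y g) (\<Phi> g (x \<one>)) < \<epsilon>"
      using \<open>g \<in> carrier G\<close> orbit[OF \<open>g \<in> carrier G\<close>] group_action_one[OF assms(1)] by simp
  qed
qed

lemma (in normal) shadowing_wrt_of_normal_subgroup:
  fixes \<Phi> :: "'a \<Rightarrow> 'c::metric_space \<Rightarrow> 'c"
  assumes "group_action G \<Phi>"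
    and S: "fin_sym_gen_set G S" "\<forall>s\<in>S. uniformly_continuous_on UNIV (\<Phi> s)"
    and SH: "finite SH" "SH \<subseteq> H"
    and shadow: "shadowing_wrt (G\<lparr>carrier := H\<rparr>) SH \<Phi> V"
    and expansive: "expansive_on (G\<lparr>carrier := H\<rparr>) \<Phi> U"
    and "\<gamma> > 0" "ball_set \<gamma> V \<subseteq> U"
  shows "shadowing_wrt G S \<Phi> V"
  unfolding shadowing_wrt_def
proof (intro allI impI)
  have Sfin: "finite S" and Sgen: "S \<subseteq> carrier G" "generate G S = carrier G"
    and Ssym: "\<forall>s\<in>S. inv s \<in> S"
    using S(1) unfolding fin_sym_gen_set_def by auto
  fix \<epsilon> :: real assume "\<epsilon> > 0"
  have carrierH: "carrier (G\<lparr>carrier := H\<rparr>) = H" by simp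
  have one: "\<one>\<^bsub>G\<lparr>carrier := H\<rparr>\<^esub> \<in> carrier (G\<lparr>carrier := H\<rparr>)"
    "\<forall>x. \<Phi> \<one>\<^bsub>G\<lparr>carrier := H\<rparr>\<^esub> x = x"
    using group_action_one[OF assms(1)] by simp_all
  obtain r where "r > 0" and unique: "\<forall>x1 x2 Y. (\<forall>h\<in>H. Y h \<in> V \<and> dist (Y h) (\<Phi> h x1) < r
      \<and> dist (Y h) (\<Phi> h x2) < r) \<longrightarrow> x1 = x2"
    by (rule expansive_on_common_shadow[OF expansive assms(9,8) one, unfolded carrierH]) (rule that)
  define \<eta> where "\<eta> = r / 2"
  have "\<eta> > 0" using \<open>r > 0\<close> by (simp add: \<eta>_def)
  have "\<forall>\<^sub>F \<delta> in at_right 0. \<forall>s\<in>S. \<forall>a b. dist a b < \<delta> \<longrightarrow> dist (\<Phi> s a) (\<Phi> s b) < \<eta>"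
    using S(2) \<open>\<eta> > 0\<close>
    by (intro eventually_ball_finite[OF Sfin] ballI uniformly_continuous_on_eventually_modulus) auto
  then obtain \<delta> where "\<delta> > 0" and modulus: "\<forall>s\<in>S. \<forall>a b. dist a b < \<delta> \<longrightarrow> dist (\<Phi> s a) (\<Phi> s b) < \<eta>"
    by (rule eventually_at_right_0_witness)
  define \<epsilon>' where "\<epsilon>' = min \<epsilon> (min \<delta> \<eta>)"
  have "\<epsilon>' > 0" using \<open>\<epsilon> > 0\<close> \<open>\<delta> > 0\<close> \<open>\<eta> > 0\<close> by (simp add: \<epsilon>'_def)
  then obtain d' where "d' > 0" and shadowH: "\<forall>y. pseudotrajectory (G\<lparr>carrier := H\<rparr>) SH \<Phi> d' y
      \<and> (\<forall>h\<in>H. y h \<in> V) \<longrightarrow> (\<exists>x. \<forall>h\<in>H. dist (y h) (\<Phi> h x) < \<epsilon>')"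
    using shadow unfolding shadowing_wrt_def carrierH by blast
  have "\<forall>t\<in>SH. t \<in> generate G S" using SH(2) Sgen(2) subset by auto
  then have "\<forall>\<^sub>F d in at_right 0. d \<le> \<eta> \<and> (\<forall>t\<in>SH. \<forall>y. pseudotrajectory G S \<Phi> d y \<longrightarrow>
      (\<forall>k\<in>carrier G. dist (y (t \<otimes> k)) (\<Phi> t (y k)) < d'))"
    using \<open>\<eta> > 0\<close> \<open>d' > 0\<close>
    by (intro eventually_conj eventually_at_right_0_le eventually_ball_finite[OF SH(1)] ballI
        pseudotrajectory_generate_eventually[OF assms(1) Sgen(1) Ssym S(2)]) auto
  then obtain d where "d > 0" "d \<le> \<eta>" and pseudoSH: "\<forall>t\<in>SH. \<forall>y. pseudotrajectory G S \<Phi> d y \<longrightarrow>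
      (\<forall>k\<in>carrier G. dist (y (t \<otimes> k)) (\<Phi> t (y k)) < d')"
    by (rule eventually_at_right_0_witness) blast
  show "\<exists>d>0. \<forall>y. pseudotrajectory G S \<Phi> d y \<and> (\<forall>g\<in>carrier G. y g \<in> V) \<longrightarrow>
      (\<exists>x. \<forall>g\<in>carrier G. dist (y g) (\<Phi> g x) < \<epsilon>)"
  proof (intro exI[of _ d] conjI allI impI \<open>d > 0\<close>, elim conjE)
    fix y assume y: "pseudotrajectory G S \<Phi> d y" and yV: "\<forall>g\<in>carrier G. y g \<in> V"
    have coset: "\<exists>x. \<forall>h\<in>H. dist (y (h \<otimes> g)) (\<Phi> h x) < \<epsilon>'" if "g \<in> carrier G" for g
    proof -
      have "\<forall>t\<in>SH. \<forall>k\<in>carrier G. dist (y (t \<otimes> k)) (\<Phi> t (y k)) < d'"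
        using pseudoSH y by simp
      then have "pseudotrajectory (G\<lparr>carrier := H\<rparr>) SH \<Phi> d' (\<lambda>h. y (h \<otimes> g))"
        by (rule pseudotrajectory_subgroup_coset[OF subset SH(2) that])
      moreover have "\<forall>h\<in>H. y (h \<otimes> g) \<in> V"
        using yV that by (meson m_closed mem_carrier)
      ultimately show ?thesis
        using shadowH[THEN spec[of _ "\<lambda>h. y (h \<otimes> g)"]] by simp
    qed
    have scales: "\<epsilon>' \<le> \<eta>" "2 * \<eta> \<le> r" by (simp_all add: \<epsilon>'_def \<eta>_def)
    have modulus': "\<forall>s\<in>S. \<forall>a b. dist a b < \<epsilon>' \<longrightarrow> dist (\<Phi> s a) (\<Phi> s b) < \<eta>"
      using modulus by (simp add: \<epsilon>'_def)
    have "\<exists>x. \<forall>g\<in>carrier G. dist (y g) (\<Phi> g x) < \<epsilon>'"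
      by (rule shadowing_of_coset_shadows[OF assms(1) Sgen Ssym unique scales modulus'
            pseudotrajectory_mono[OF y \<open>d \<le> \<eta>\<close>] yV]) (intro ballI coset)
    moreover have "\<epsilon>' \<le> \<epsilon>" by (simp add: \<epsilon>'_def)
    ultimately show "\<exists>x. \<forall>g\<in>carrier G. dist (y g) (\<Phi> g x) < \<epsilon>"
      by (meson order_less_le_trans)
  qed
qed

theorem lemma1:
  fixes G :: "('g, 'b) monoid_scheme"
    and H :: "'g set"
    and \<Phi> :: "'g \<Rightarrow> 'a::metric_space \<Rightarrow> 'a"
    and U V :: "'a set"
  assumes "group G"
    and "fin_gen_group G"
    and "H \<lhd> G"
    and "fin_gen_group (G\<lparr>carrier := H\<rparr>)"
    and "group_action G \<Phi>"
    and "unif_cont_action G \<Phi>"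
    and "topologically_anosov (G\<lparr>carrier := H\<rparr>) \<Phi> U V"
  shows "topologically_anosov G \<Phi> U V"
proof -
  interpret normal H G by fact
  obtain \<gamma> SH where "\<gamma> > 0" "ball_set \<gamma> V \<subseteq> U"
    and SH: "fin_sym_gen_set (G\<lparr>carrier := H\<rparr>) SH" "shadowing_wrt (G\<lparr>carrier := H\<rparr>) SH \<Phi> V"
    and expansive: "expansive_on (G\<lparr>carrier := H\<rparr>) \<Phi> U"
    using assms(7) unfolding topologically_anosov_def shadowing_on_def by blast
  obtain S where S: "fin_sym_gen_set G S" "\<forall>s\<in>S. uniformly_continuous_on UNIV (\<Phi> s)"
    using assms(6) unfolding unif_cont_action_def by blast
  have "finite SH" "SH \<subseteq> H"
    using SH(1) unfolding fin_sym_gen_set_def by auto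
  then have "shadowing_on G \<Phi> V"
    unfolding shadowing_on_def
    using S shadowing_wrt_of_normal_subgroup[OF assms(5) S _ _ SH(2) expansive \<open>\<gamma> > 0\<close>] \<open>ball_set \<gamma> V \<subseteq> U\<close>
    by blast
  moreover have "expansive_on G \<Phi> U"
    using expansive_on_mono_carrier[OF expansive] subset by simp
  ultimately show ?thesis
    unfolding topologically_anosov_def using \<open>\<gamma> > 0\<close> \<open>ball_set \<gamma> V \<subseteq> U\<close> by blast
qed

end
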